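(* Let $d\in\mathbb{N}$ and let $\mathcal{P}$ be a partition of $\mathbb{R}^{d}$. Suppose there exists $D\in(0,\infty)$ that is a strict pairwise bound for every $X\in\mathcal{P}$, and there exists $\epsilon\in(0,\infty)$ such that $|\mathcal{N}_{\epsilon}(\vec{q})|\leq d+1$ for all $\vec{q}\in\mathbb{R}^{d}$. Then there exists $\vec{p}\in\mathbb{R}^{d}$ such that $|\mathcal{N}_{\epsilon}(\vec{p})|=d+1$. Furthermore, $\mathcal{P}$ contains a $(d+1)$-clique.
   Context: On $\mathbb{R}^d$ use $d_{max}(\vec{x},\vec{y})=\max_i|x_i-y_i|$; $D$ is a strict pairwise bound for $X$ if $d_{max}(\vec{x},\vec{y})<D$ for all $\vec{x},\vec{y}\in X$; $\overline{B}_{\epsilon}(\vec{p})=\{\vec{x}:d_{max}(\vec{x},\vec{p})\le\epsilon\}$; $\mathcal{N}_{\epsilon}(\vec{p})=\{X\in\mathcal{P}: X\cap\overline{B}_{\epsilon}(\vec{p})\neq\emptyset\}$. Members $X,Y$ are adjacent if $\overline{X}\cap\overline{Y}\ne\emptyset$; an $n$-clique is a set of $n$ distinct pairwise adjacent members. *)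

theory Defs
  imports "HOL-Analysis.Analysis"
begin

text \<open>Max-metric on R^d, modelled as real^'n with d = CARD('n).\<close>
definition dmax :: "real^'n \<Rightarrow> real^'n \<Rightarrow> real" where
  "dmax x y = Max (range (\<lambda>i. \<bar>x$i - y$i\<bar>))"

definition is_partition :: "'a set set \<Rightarrow> bool" where
  "is_partition P \<longleftrightarrow> (\<forall>X\<in>P. X \<noteq> {}) \<and>
     (\<forall>X\<in>P. \<forall>Y\<in>P. X \<noteq> Y \<longrightarrow> X \<inter> Y = {}) \<and> \<Union>P = UNIV"

definition strict_pairwise_bound :: "real \<Rightarrow> (real^'n) set \<Rightarrow> bool" where
  "strict_pairwise_bound D X \<longleftrightarrow> (\<forall>x\<in>X. \<forall>y\<in>X. dmax x y < D)"

definition cball_max :: "real \<Rightarrow> real^'n \<Rightarrow> (real^'n) set" where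
  "cball_max e p = {x. dmax x p \<le> e}"

definition nbhd :: "(real^'n) set set \<Rightarrow> real \<Rightarrow> real^'n \<Rightarrow> (real^'n) set set" where
  "nbhd P e p = {X\<in>P. X \<inter> cball_max e p \<noteq> {}}"

definition adjacent :: "(real^'n) set \<Rightarrow> (real^'n) set \<Rightarrow> bool" where
  "adjacent X Y \<longleftrightarrow> closure X \<inter> closure Y \<noteq> {}"

definition has_clique :: "(real^'n) set set \<Rightarrow> nat \<Rightarrow> bool" where
  "has_clique P n \<longleftrightarrow> (\<exists>C\<subseteq>P. finite C \<and> card C = n \<and>
      (\<forall>X\<in>C. \<forall>Y\<in>C. adjacent X Y))"

end

theory Submission
  imports Defs "HOL-Library.Cardinality"
begin

(* Colour each member X of the partition by i if X lies in the half-space x_i > 0, and by 0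
   if X lies below the hyperplane x_1 + ... + x_d = d D; a set of max-diameter less than D always
   admits such a colour. The unions A_k of the colour classes satisfy a KKM-type covering condition
   on the cube [0, dD]^d, so by Brouwer's fixed point theorem some point p lies in the closure of
   every A_k. Then every max-ball around p meets members of all d + 1 colours; together with the
   bound on the neighbourhoods this forces N_delta(p) = N_e(p) for all 0 < delta <= e, so p lies in
   the closure of each of the d + 1 members of N_e(p), and these form a clique. *)

lemma sum_UNIV_option:
  fixes h :: "'a::finite option \<Rightarrow> 'b::comm_monoid_add"
  shows "(\<Sum>k\<in>UNIV. h k) = h None + (\<Sum>i\<in>UNIV. h (Some i))"
proof -
  have "(\<Sum>k\<in>UNIV. h k) = (\<Sum>k\<in>insert None (range Some). h k)"
    by (simp add: UNIV_option_conv)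
  also have "\<dots> = h None + (\<Sum>i\<in>UNIV. h (Some i))"
    by (simp add: sum.reindex)
  finally show ?thesis .
qed

lemma dmax_component_le: "\<bar>x$i - y$i\<bar> \<le> dmax x y"
  unfolding dmax_def by (rule Max_ge) auto

lemma dmax_le_dist: "dmax x y \<le> dist x y"
proof -
  have "\<bar>x$i - y$i\<bar> \<le> dist x y" for i
    using component_le_norm_cart[of "x - y" i] by (simp add: dist_norm)
  then show ?thesis
    unfolding dmax_def by (subst Max_le_iff) auto
qed

lemma dist_le_card_mult_dmax: "dist x y \<le> real CARD('n) * dmax x (y::real^'n)"
proof -
  have "dist x y \<le> (\<Sum>i\<in>UNIV. \<bar>(x - y)$i\<bar>)"
    unfolding dist_norm by (rule norm_le_l1_cart)
  also have "\<dots> \<le> (\<Sum>i\<in>(UNIV::'n set). dmax x y)"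
    by (rule sum_mono) (simp add: dmax_component_le)
  finally show ?thesis by simp
qed

lemma in_closure_iff_cball_max:
  fixes p :: "real^'n"
  shows "p \<in> closure X \<longleftrightarrow> (\<forall>\<delta>>0. X \<inter> cball_max \<delta> p \<noteq> {})"
proof
  assume "p \<in> closure X"
  show "\<forall>\<delta>>0. X \<inter> cball_max \<delta> p \<noteq> {}"
  proof (intro allI impI)
    fix \<delta> :: real assume "\<delta> > 0"
    then obtain y where "y \<in> X" "dist y p < \<delta>"
      using \<open>p \<in> closure X\<close> closure_approachable by blast
    then show "X \<inter> cball_max \<delta> p \<noteq> {}"
      using dmax_le_dist[of y p] by (force simp: cball_max_def)
  qed
next
  assume balls: "\<forall>\<delta>>0. X \<inter> cball_max \<delta> p \<noteq> {}"
  show "p \<in> closure X"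
    unfolding closure_approachable
  proof (intro allI impI)
    fix \<epsilon> :: real assume "\<epsilon> > 0"
    define \<delta> where "\<delta> = \<epsilon> / (2 * real CARD('n))"
    have "\<delta> > 0" using \<open>\<epsilon> > 0\<close> by (simp add: \<delta>_def)
    then obtain y where "y \<in> X" and y: "dmax y p \<le> \<delta>"
      using balls by (auto simp: cball_max_def)
    have "dist y p \<le> real CARD('n) * \<delta>"
      using dist_le_card_mult_dmax[of y p] y
      by (meson mult_left_mono of_nat_0_le_iff order_trans)
    also have "\<dots> < \<epsilon>" using \<open>\<epsilon> > 0\<close> by (simp add: \<delta>_def)
    finally show "\<exists>y\<in>X. dist y p < \<epsilon>" using \<open>y \<in> X\<close> by blast
  qed
qed

lemma nbhd_mono: "\<delta> \<le> e \<Longrightarrow> nbhd P \<delta> p \<subseteq> nbhd P e p"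
  by (auto simp: nbhd_def cball_max_def)

definition kkm_cell :: "real \<Rightarrow> 'n option \<Rightarrow> (real^'n) set" where
  "kkm_cell L k = (case k of
      Some i \<Rightarrow> {x. 0 < x$i}
    | None \<Rightarrow> {x. (\<Sum>i\<in>UNIV. x$i) < L})"

lemma kkm_cover_nonempty:
  assumes cover: "\<And>x. \<exists>k. x \<in> A k \<inter> kkm_cell L k"
  shows "A k \<noteq> {}"
proof (cases k)
  case None
  obtain k' where "0 \<in> A k' \<inter> kkm_cell L k'" using cover by blast
  with None show ?thesis
    by (cases k') (auto simp: kkm_cell_def)
next
  case (Some j)
  obtain k' where k': "axis j L \<in> A k' \<inter> kkm_cell L k'" using cover by blast
  have "(\<Sum>i\<in>UNIV. axis j L $ i) = L"
    by (simp add: axis_def)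
  with k' Some show ?thesis
    by (cases k') (auto simp: kkm_cell_def axis_def split: if_splits)
qed

(* The normalised distance functions to the A k define a self-map of the cube [0, L]^d whose
   fixed point would have to lie outside every cell containing it. *)
lemma kkm_common_closure_point:
  fixes A :: "'n option \<Rightarrow> (real^'n) set"
  assumes cover: "\<And>x. \<exists>k. x \<in> A k \<inter> kkm_cell L k"
  shows "\<exists>p. \<forall>k. p \<in> closure (A k)"
proof (rule ccontr)
  assume no_common: "\<not> ?thesis"
  have "L > 0"
    using cover[of 0] by (auto simp: kkm_cell_def split: option.splits)
  define g where "g k x = infdist x (A k)" for k x
  define S where "S x = (\<Sum>k\<in>UNIV. g k x)" for x
  have g_nonneg: "0 \<le> g k x" for k x
    by (simp add: g_def infdist_nonneg)
  have S_pos: "0 < S x" for x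
  proof -
    obtain k where "x \<notin> closure (A k)" using no_common by blast
    then have "0 < g k x"
      using in_closure_iff_infdist_zero[OF kkm_cover_nonempty[OF cover]] g_nonneg[of k x]
      by (auto simp: g_def)
    also have "g k x \<le> S x"
      unfolding S_def by (rule member_le_sum) (auto simp: g_nonneg)
    finally show ?thesis .
  qed
  define f where "f x = (\<chi> i. L * g (Some i) x / S x)" for x
  have "continuous_on UNIV S"
    unfolding S_def g_def by (intro continuous_intros)
  then have "continuous_on UNIV f"
    unfolding f_def g_def
    by (intro continuous_on_vec_lambda continuous_intros)
      (auto simp: S_pos[THEN less_imp_neq, symmetric])
  then have "continuous_on (cbox 0 (\<chi> i. L)) f"
    by (rule continuous_on_subset) simp
  moreover have "f \<in> cbox 0 (\<chi> i. L) \<rightarrow> cbox 0 (\<chi> i. L)"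
  proof
    fix x
    have "g (Some i) x \<le> S x" for i
      unfolding S_def by (rule member_le_sum) (auto simp: g_nonneg)
    then show "f x \<in> cbox 0 (\<chi> i. L)"
      using S_pos[of x] \<open>L > 0\<close> g_nonneg
      by (auto simp: f_def mem_box_cart divide_simps)
  qed
  moreover have "0 \<in> cbox 0 (\<chi> i. L)"
    using \<open>L > 0\<close> by (simp add: mem_box_cart)
  ultimately obtain x where fx: "f x = x"
    using brouwer[OF compact_cbox convex_box(1)] by (metis empty_iff)
  obtain k where "x \<in> A k" and cell: "x \<in> kkm_cell L k" using cover by blast
  then have gk: "g k x = 0" by (simp add: g_def)
  show False
  proof (cases k)
    case (Some i)
    have "x$i = L * g (Some i) x / S x" using fx by (metis f_def vec_lambda_beta)
    with Some gk cell show False by (simp add: kkm_cell_def)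
  next
    case None
    have "(\<Sum>i\<in>UNIV. x$i) = (\<Sum>i\<in>UNIV. L * g (Some i) x / S x)"
      using fx by (metis f_def vec_lambda_beta)
    also have "\<dots> = L * (S x - g None x) / S x"
      by (simp add: S_def sum_UNIV_option[of "\<lambda>k. g k x"] sum_divide_distrib[symmetric]
          sum_distrib_left[symmetric])
    also have "\<dots> = L"
      using None gk S_pos[of x] by simp
    finally show False using None cell by (simp add: kkm_cell_def)
  qed
qed

lemma strict_pairwise_bound_in_kkm_cell:
  fixes X :: "(real^'n) set"
  assumes "strict_pairwise_bound D X"
  shows "\<exists>k. X \<subseteq> kkm_cell (D * CARD('n)) k"
proof (rule ccontr)
  assume no_cell: "\<not> ?thesis"
  have nonpos: "\<exists>y\<in>X. y$i \<le> 0" for i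
    using no_cell[unfolded not_ex, rule_format, of "Some i"] by (auto simp: kkm_cell_def not_less)
  have "\<exists>y\<in>X. D * CARD('n) \<le> (\<Sum>j\<in>UNIV. y$j)"
    using no_cell[unfolded not_ex, rule_format, of None] by (auto simp: kkm_cell_def not_less)
  then obtain y where "y \<in> X" and y: "D * CARD('n) \<le> (\<Sum>j\<in>UNIV. y$j)" by blast
  have "\<exists>i. D \<le> y$i"
  proof (rule ccontr)
    assume "\<not> ?thesis"
    then have "(\<Sum>j\<in>UNIV. y$j) < (\<Sum>j\<in>(UNIV::'n set). D)"
      by (intro sum_strict_mono) (auto simp: not_le)
    with y show False by (simp add: mult.commute)
  qed
  then obtain i where "D \<le> y$i" by blast
  moreover obtain z where "z \<in> X" "z$i \<le> 0" using nonpos by blast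
  ultimately have "D \<le> dmax y z"
    using dmax_component_le[of y i z] by simp
  then show False
    using assms \<open>y \<in> X\<close> \<open>z \<in> X\<close>
    by (auto simp: strict_pairwise_bound_def not_less[symmetric])
qed

lemma card_colours_le_card_nbhd:
  fixes P :: "(real^'n) set set" and c :: "(real^'n) set \<Rightarrow> 'k::finite"
  assumes accumulate: "\<And>k. p \<in> closure (\<Union>{X\<in>P. c X = k})"
    and "\<delta> > 0" and "finite (nbhd P \<delta> p)"
  shows "CARD('k) \<le> card (nbhd P \<delta> p)"
proof -
  have "k \<in> c ` nbhd P \<delta> p" for k
  proof -
    have "\<Union>{X\<in>P. c X = k} \<inter> cball_max \<delta> p \<noteq> {}"
      using accumulate[of k] \<open>\<delta> > 0\<close> in_closure_iff_cball_max by blast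
    then obtain X where "X \<in> nbhd P \<delta> p" "c X = k"
      by (auto simp: nbhd_def)
    then show ?thesis by blast
  qed
  then have "c ` nbhd P \<delta> p = UNIV" by blast
  then show ?thesis
    using card_image_le[OF \<open>finite (nbhd P \<delta> p)\<close>, of c] by simp
qed

(* Once every max-ball around p meets all colour classes, the bound on card (nbhd P e p) leaves
   no room for nbhd P delta p to shrink as delta goes to 0. *)
lemma clique_at_common_closure_point:
  fixes P :: "(real^'n) set set" and c :: "(real^'n) set \<Rightarrow> 'k::finite"
  assumes accumulate: "\<And>k. p \<in> closure (\<Union>{X\<in>P. c X = k})"
    and "e > 0" and fin: "finite (nbhd P e p)" and bound: "card (nbhd P e p) \<le> CARD('k)"
  shows "card (nbhd P e p) = CARD('k)" and "has_clique P CARD('k)"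
proof -
  have stable: "nbhd P \<delta> p = nbhd P e p" if "0 < \<delta>" "\<delta> \<le> e" for \<delta>
  proof (rule card_subset_eq[OF fin nbhd_mono[OF \<open>\<delta> \<le> e\<close>]])
    have "finite (nbhd P \<delta> p)"
      using fin nbhd_mono[OF \<open>\<delta> \<le> e\<close>] by (rule finite_subset[rotated])
    then show "card (nbhd P \<delta> p) = card (nbhd P e p)"
      using card_colours_le_card_nbhd[OF accumulate \<open>0 < \<delta>\<close>] bound
        card_mono[OF fin nbhd_mono[OF \<open>\<delta> \<le> e\<close>]] by linarith
  qed
  show card: "card (nbhd P e p) = CARD('k)"
    using card_colours_le_card_nbhd[OF accumulate \<open>e > 0\<close> fin] bound by linarith
  have closure_point: "p \<in> closure X" if "X \<in> nbhd P e p" for X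
    unfolding in_closure_iff_cball_max
  proof (intro allI impI)
    fix \<delta> :: real assume "\<delta> > 0"
    then have "X \<in> nbhd P (min \<delta> e) p"
      using stable[of "min \<delta> e"] \<open>e > 0\<close> that by simp
    then show "X \<inter> cball_max \<delta> p \<noteq> {}"
      by (auto simp: nbhd_def cball_max_def)
  qed
  show "has_clique P CARD('k)"
    unfolding has_clique_def
  proof (intro exI[of _ "nbhd P e p"] conjI ballI)
    show "nbhd P e p \<subseteq> P" by (auto simp: nbhd_def)
    show "finite (nbhd P e p)" by (rule fin)
    show "card (nbhd P e p) = CARD('k)" by (rule card)
    fix X Y assume "X \<in> nbhd P e p" "Y \<in> nbhd P e p"
    then have "p \<in> closure X \<inter> closure Y"
      by (simp add: closure_point)
    then show "adjacent X Y"
      unfolding adjacent_def by blast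
  qed
qed

theorem mainTheorem15:
  fixes P :: "(real^'n) set set" and D e :: real
  assumes "is_partition P"
    and "D > 0" and "\<forall>X\<in>P. strict_pairwise_bound D X"
    and "e > 0"
    and "\<forall>q. finite (nbhd P e q) \<and> card (nbhd P e q) \<le> CARD('n) + 1"
  shows "(\<exists>p. card (nbhd P e p) = CARD('n) + 1) \<and> has_clique P (CARD('n) + 1)"
proof -
  define L where "L = D * CARD('n)"
  have "\<forall>X\<in>P. \<exists>k. X \<subseteq> kkm_cell L k"
    using assms(3) strict_pairwise_bound_in_kkm_cell unfolding L_def by blast
  then obtain c where colour: "\<And>X. X \<in> P \<Longrightarrow> X \<subseteq> kkm_cell L (c X)"
    by (metis bchoice)
  have cover: "\<exists>k. x \<in> \<Union>{X\<in>P. c X = k} \<inter> kkm_cell L k" for x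
  proof -
    have "x \<in> \<Union>P" using \<open>is_partition P\<close> by (simp add: is_partition_def)
    then obtain X where "X \<in> P" "x \<in> X" by blast
    then show ?thesis using colour by blast
  qed
  obtain p where "\<And>k. p \<in> closure (\<Union>{X\<in>P. c X = k})"
    using kkm_common_closure_point[OF cover] by blast
  from clique_at_common_closure_point[OF this \<open>e > 0\<close>]
  have "card (nbhd P e p) = CARD('n option)" and "has_clique P CARD('n option)"
    using assms(5) by simp_all
  then show ?thesis by auto
qed

end
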